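(* For any $A\in\mathrm{GL}(\mathcal S)$ with $A\notin\mathrm{Inv}(\mathcal S)$, the centralizer of $A$ in $\mathrm{Inv}(\mathcal S)$ is a proper subgroup of $\mathrm{Inv}(\mathcal S)$; i.e. there exists $\varepsilon\in\mathrm{Inv}(\mathcal S)$ with $A\circ\varepsilon\neq\varepsilon\circ A$.
   Context: Work over an algebraically closed field of characteristic $\neq2$. $F(X)=\sum_{i=0}^6f_iX^i$, $f_6\neq0$, distinct roots $\theta_1,\dots,\theta_6$. $P_j(X)=\prod_{i\ne j}(X-\theta_i)$, $\omega_j=P_j(\theta_j)$. Points of $\mathbb P^5$ are identified with $P(X)=\sum_{j=0}^5p_jX^j$; $\pi_j=P(\theta_j)/\omega_j$. $\mathcal S\subset\mathbb P^5$ is defined by $\sum_j\theta_j^i\omega_j\pi_j^2=0$, $i=0,1,2$. $\varepsilon^{(i)}$ is the involution $\pi_j\mapsto(-1)^{\delta_{ij}}\pi_j$; $\mathrm{Inv}(\mathcal S)$ is the group of order 32 generated by them. The 32 lines $\varepsilon(\Delta_0)$, $\varepsilon\in\mathrm{Inv}(\mathcal S)$, with $\Delta_0=\{(p_0:p_1:0:0:0:0)\}$, are all the lines on $\mathcal S$. $\mathrm{GL}(\mathcal S)$ is the group of automorphisms of $\mathcal S$ which are restrictions of projective linear transformations of $\mathbb P^5$. *)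

theory Defs
  imports "HOL-Computational_Algebra.Polynomial"
begin

text \<open>Roots are indexed by 0..5 (paper: 1..6). Points of P^5 are nonzero polynomials
  P of degree at most 5, up to nonzero scalars; S is represented by its affine cone.\<close>

definition Pj :: "(nat \<Rightarrow> 'k::field) \<Rightarrow> nat \<Rightarrow> 'k poly" where
  "Pj \<theta> j = (\<Prod>i\<in>{..<6} - {j}. [:- \<theta> i, 1:])"

definition omega :: "(nat \<Rightarrow> 'k::field) \<Rightarrow> nat \<Rightarrow> 'k" where
  "omega \<theta> j = poly (Pj \<theta> j) (\<theta> j)"

definition picoord :: "(nat \<Rightarrow> 'k::field) \<Rightarrow> 'k poly \<Rightarrow> nat \<Rightarrow> 'k" where
  "picoord \<theta> P j = poly P (\<theta> j) / omega \<theta> j"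

definition V5 :: "'k::field poly set" where
  "V5 = {P. degree P \<le> 5}"

definition Scone :: "(nat \<Rightarrow> 'k::field) \<Rightarrow> 'k poly set" where
  "Scone \<theta> = {P \<in> V5. P \<noteq> 0 \<and>
     (\<forall>i<3. (\<Sum>j<6. \<theta> j ^ i * omega \<theta> j * (picoord \<theta> P j)^2) = 0)}"

definition epsInv :: "(nat \<Rightarrow> 'k::field) \<Rightarrow> nat set \<Rightarrow> 'k poly \<Rightarrow> 'k poly" where
  "epsInv \<theta> T P = (\<Sum>j<6. smult ((if j \<in> T then -1 else 1) * picoord \<theta> P j) (Pj \<theta> j))"

text \<open>Inv(S): the group generated by the eps^(i), i.e. all sign changes.\<close>
definition Inv_S :: "(nat \<Rightarrow> 'k::field) \<Rightarrow> ('k poly \<Rightarrow> 'k poly) set" where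
  "Inv_S \<theta> = {epsInv \<theta> T | T. T \<subseteq> {..<6}}"

text \<open>Invertible linear maps of the 6-dimensional space (representing projective
  linear transformations of P^5).\<close>
definition lin_bij :: "('k::field poly \<Rightarrow> 'k poly) \<Rightarrow> bool" where
  "lin_bij L \<longleftrightarrow> (\<forall>P\<in>V5. \<forall>Q\<in>V5. L (P + Q) = L P + L Q)
     \<and> (\<forall>c. \<forall>P\<in>V5. L (smult c P) = smult c (L P)) \<and> bij_betw L V5 V5"

definition in_GL_S :: "(nat \<Rightarrow> 'k::field) \<Rightarrow> ('k poly \<Rightarrow> 'k poly) \<Rightarrow> bool" where
  "in_GL_S \<theta> L \<longleftrightarrow> lin_bij L \<and> L ` Scone \<theta> = Scone \<theta>"

definition same_on_S :: "(nat \<Rightarrow> 'k::field) \<Rightarrow> ('k poly \<Rightarrow> 'k poly) \<Rightarrow> ('k poly \<Rightarrow> 'k poly) \<Rightarrow> bool" where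
  "same_on_S \<theta> L M \<longleftrightarrow> (\<forall>P\<in>Scone \<theta>. \<exists>c. L P = smult c (M P))"

end

theory Submission
  imports Defs
begin

text \<open>
  Suppose a linear automorphism L of the cone over S commutes, projectively on S,
  with every sign change. We show that L then agrees with a sign change on S, contradicting
  the hypothesis that L is not in Inv(S).

  For the commuting map L we show in turn: (A) L preserves the vanishing of each pi-coordinate
  on S; (B) hence L is diagonal in the Lagrange basis, L P_j = d_j P_j; (C) because L maps
  the lines X - t to S, the weights d_j^2 have vanishing moments, so all d_j^2 coincide;
  (D) so d_j = +-d_0 and L is d_0 times a sign change. The main theorem follows by contradiction;
  it only uses that the six roots are distinct and that 2 is invertible, not the polynomial F
  itself nor algebraic closedness.
\<close>

section \<open>Lagrange calculus for six distinct nodes\<close>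

locale six_nodes =
  fixes \<theta> :: "nat \<Rightarrow> 'k::field"
  assumes inj: "inj_on \<theta> {..<6}"
begin

lemma poly_Pj: "poly (Pj \<theta> j) x = (\<Prod>i\<in>{..<6}-{j}. x - \<theta> i)"
  by (simp add: Pj_def poly_prod)

lemma Pj_vanishes: "i < 6 \<Longrightarrow> i \<noteq> j \<Longrightarrow> poly (Pj \<theta> j) (\<theta> i) = 0"
  unfolding poly_Pj by (rule prod_zero) auto

lemma omega_nonzero: "j < 6 \<Longrightarrow> omega \<theta> j \<noteq> 0"
  unfolding omega_def poly_Pj using inj by (auto simp: inj_on_def)

lemma degree_Pj: assumes "j < 6" shows "degree (Pj \<theta> j) = 5"
proof -
  have "degree (Pj \<theta> j) = (\<Sum>i\<in>{..<6}-{j}. degree [:- \<theta> i, 1:])"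
    unfolding Pj_def by (rule degree_prod_eq_sum_degree) auto
  also have "\<dots> = 5" using assms by simp
  finally show ?thesis .
qed

lemma coeff5_Pj: assumes "j < 6" shows "coeff (Pj \<theta> j) 5 = 1"
proof -
  have "lead_coeff (Pj \<theta> j) = 1" unfolding Pj_def lead_coeff_prod by simp
  thus ?thesis using degree_Pj[OF assms] by simp
qed

lemma V5_zero: "0 \<in> V5" by (simp add: V5_def)

lemma V5_add: "P \<in> V5 \<Longrightarrow> Q \<in> V5 \<Longrightarrow> P + Q \<in> V5"
  unfolding V5_def by (auto intro: order.trans[OF degree_add_le])

lemma V5_smult: "P \<in> V5 \<Longrightarrow> smult c P \<in> V5"
  unfolding V5_def by (auto intro: order.trans[OF degree_smult_le])

lemma V5_sum: "(\<And>j. j \<in> A \<Longrightarrow> f j \<in> V5) \<Longrightarrow> (\<Sum>j\<in>A. f j) \<in> V5"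
  by (cases "finite A") (auto simp: V5_def intro!: degree_sum_le)

lemma Pj_V5: "j < 6 \<Longrightarrow> Pj \<theta> j \<in> V5"
  using degree_Pj by (simp add: V5_def)

lemma combination_V5: "(\<Sum>j<6. smult (a j) (Pj \<theta> j)) \<in> V5"
  by (intro V5_sum V5_smult Pj_V5) simp

lemma picoord_add: "picoord \<theta> (P + Q) k = picoord \<theta> P k + picoord \<theta> Q k"
  by (simp add: picoord_def add_divide_distrib)

lemma picoord_smult: "picoord \<theta> (smult c P) k = c * picoord \<theta> P k"
  by (simp add: picoord_def)

lemma picoord_Pj: "i < 6 \<Longrightarrow> j < 6 \<Longrightarrow> picoord \<theta> (Pj \<theta> j) i = (if i = j then 1 else 0)"
  using Pj_vanishes omega_nonzero by (auto simp: picoord_def omega_def)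

lemma picoord_combination:
  assumes k: "k < 6" shows "picoord \<theta> (\<Sum>j<6. smult (a j) (Pj \<theta> j)) k = a k"
proof -
  have "poly (\<Sum>j<6. smult (a j) (Pj \<theta> j)) (\<theta> k) = (\<Sum>j<6. if j = k then a k * omega \<theta> k else 0)"
    unfolding poly_sum by (rule sum.cong) (auto simp: Pj_vanishes k omega_def)
  also have "\<dots> = a k * omega \<theta> k" using k by simp
  finally show ?thesis using omega_nonzero[OF k] by (simp add: picoord_def)
qed

text \<open>Lagrange interpolation: a polynomial of degree at most 5 is determined by its values
  at the six nodes, so it is the combination of the basis with its pi-coordinates.\<close>

lemma lagrange_expansion:
  assumes "P \<in> V5" shows "P = (\<Sum>j<6. smult (picoord \<theta> P j) (Pj \<theta> j))"
proof (rule ccontr)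
  define D where "D = P - (\<Sum>j<6. smult (picoord \<theta> P j) (Pj \<theta> j))"
  assume "\<not> ?thesis"
  hence D0: "D \<noteq> 0" by (simp add: D_def)
  have "degree D \<le> 5"
    unfolding D_def using assms combination_V5[of "picoord \<theta> P"]
    by (auto simp: V5_def intro: order.trans[OF degree_diff_le])
  have "\<theta> ` {..<6} \<subseteq> {x. poly D x = 0}"
  proof
    fix x assume "x \<in> \<theta> ` {..<6}"
    then obtain k where k: "k < 6" "x = \<theta> k" by auto
    have "picoord \<theta> D k = picoord \<theta> P k - picoord \<theta> (\<Sum>j<6. smult (picoord \<theta> P j) (Pj \<theta> j)) k"
      by (simp add: D_def picoord_def diff_divide_distrib)
    hence "picoord \<theta> D k = 0" by (simp add: picoord_combination[OF k(1)])
    thus "x \<in> {x. poly D x = 0}" using k omega_nonzero[OF k(1)] by (simp add: picoord_def)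
  qed
  hence "card (\<theta> ` {..<6}) \<le> card {x. poly D x = 0}"
    by (intro card_mono poly_roots_finite D0)
  moreover have "card (\<theta> ` {..<6}) = 6" using card_image[OF inj] by simp
  ultimately show False using card_poly_roots_bound[OF D0] \<open>degree D \<le> 5\<close> by simp
qed

lemma picoord_ext:
  assumes "P \<in> V5" "Q \<in> V5" "\<And>j. j < 6 \<Longrightarrow> picoord \<theta> P j = picoord \<theta> Q j"
  shows "P = Q"
proof -
  have "(\<Sum>j<6. smult (picoord \<theta> P j) (Pj \<theta> j)) = (\<Sum>j<6. smult (picoord \<theta> Q j) (Pj \<theta> j))"
    using assms(3) by (intro sum.cong) auto
  thus ?thesis using lagrange_expansion[OF assms(1)] lagrange_expansion[OF assms(2)] by simp
qed

text \<open>Comparing the coefficients of X^5 in the Lagrange expansion of r.\<close>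

lemma sum_over_nodes_coeff5:
  assumes "degree r \<le> 5" shows "(\<Sum>j<6. poly r (\<theta> j) / omega \<theta> j) = coeff r 5"
proof -
  have "coeff r 5 = coeff (\<Sum>j<6. smult (picoord \<theta> r j) (Pj \<theta> j)) 5"
    using lagrange_expansion[of r] assms by (simp add: V5_def)
  also have "\<dots> = (\<Sum>j<6. poly r (\<theta> j) / omega \<theta> j)"
    unfolding coeff_sum by (rule sum.cong) (auto simp: coeff5_Pj picoord_def)
  finally show ?thesis by simp
qed

lemma vanishing_moments_poly:
  assumes moments: "\<And>n. n \<le> 4 \<Longrightarrow> (\<Sum>j<6. y j * \<theta> j ^ n / omega \<theta> j) = 0"
    and deg: "degree r \<le> 4"
  shows "(\<Sum>j<6. y j * poly r (\<theta> j) / omega \<theta> j) = 0"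
proof -
  have expand: "poly r x = (\<Sum>n\<le>4. coeff r n * x ^ n)" for x
  proof -
    have "(\<Sum>i\<le>degree r. coeff r i * x ^ i) = (\<Sum>n\<le>4. coeff r n * x ^ n)"
      by (rule sum.mono_neutral_left) (use deg in \<open>auto simp: coeff_eq_0\<close>)
    thus ?thesis by (simp add: poly_altdef)
  qed
  have "(\<Sum>j<6. y j * poly r (\<theta> j) / omega \<theta> j)
      = (\<Sum>j<6. \<Sum>n\<le>4. coeff r n * (y j * \<theta> j ^ n / omega \<theta> j))"
    by (rule sum.cong) (auto simp: expand sum_distrib_left sum_divide_distrib algebra_simps)
  also have "\<dots> = (\<Sum>n\<le>4. coeff r n * (\<Sum>j<6. y j * \<theta> j ^ n / omega \<theta> j))"
    by (subst sum.swap) (simp add: sum_distrib_left)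
  also have "\<dots> = 0" using moments by simp
  finally show ?thesis .
qed

lemma unit_moments: "n \<le> 4 \<Longrightarrow> (\<Sum>j<6. 1 * \<theta> j ^ n / omega \<theta> j) = 0"
  using sum_over_nodes_coeff5[of "monom 1 n"] by (simp add: poly_monom degree_monom_eq coeff_monom)

text \<open>A weight with vanishing moments of order at most 4 is constant on the nodes: test it
  against the quartic vanishing at all nodes except theta_j and theta_m.\<close>

lemma vanishing_moments_constant:
  assumes moments: "\<And>n. n \<le> 4 \<Longrightarrow> (\<Sum>l<6. y l * \<theta> l ^ n / omega \<theta> l) = 0"
    and j: "j < 6" and m: "m < 6"
  shows "y j = y m"
proof (cases "j = m")
  case False
  define r where "r = (\<Prod>i\<in>{..<6}-{j,m}. [:- \<theta> i, 1:])"
  have poly_r: "poly r x = (\<Prod>i\<in>{..<6}-{j,m}. x - \<theta> i)" for x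
    by (simp add: r_def poly_prod)
  have "degree r \<le> sum (degree \<circ> (\<lambda>i. [:- \<theta> i, 1:])) ({..<6}-{j,m})"
    unfolding r_def by (rule degree_prod_sum_le) simp
  also have "\<dots> = 4" using j m False by (simp add: card_Diff_subset)
  finally have deg: "degree r \<le> 4" .
  define a where "a l = poly r (\<theta> l) / omega \<theta> l" for l
  have aj: "a j \<noteq> 0"
    unfolding a_def poly_r using inj j m omega_nonzero[OF j] by (auto simp: inj_on_def)
  have two_terms: "(\<Sum>l<6. z l * poly r (\<theta> l) / omega \<theta> l) = z j * a j + z m * a m" for z
  proof -
    have "(\<Sum>l<6. z l * poly r (\<theta> l) / omega \<theta> l) = (\<Sum>l\<in>{j,m}. z l * poly r (\<theta> l) / omega \<theta> l)"
      using j m unfolding poly_r by (intro sum.mono_neutral_right) (auto intro: prod_zero)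
    thus ?thesis using False by (simp add: a_def)
  qed
  have "y j * a j + y m * a m = 0"
    using vanishing_moments_poly[OF moments deg] two_terms by simp
  moreover have "a j + a m = 0"
    using vanishing_moments_poly[OF unit_moments deg] two_terms[of "\<lambda>_. 1"] by simp
  hence "a m = - a j" by (simp add: eq_neg_iff_add_eq_0 add.commute)
  ultimately have "(y j - y m) * a j = 0" by (simp add: algebra_simps)
  thus ?thesis using aj by simp
qed simp

section \<open>Sign changes and the cone over S\<close>

lemma picoord_epsInv:
  "k < 6 \<Longrightarrow> picoord \<theta> (epsInv \<theta> T P) k = (if k \<in> T then -1 else 1) * picoord \<theta> P k"
  unfolding epsInv_def by (rule picoord_combination)

lemma epsInv_V5: "epsInv \<theta> T P \<in> V5"
  unfolding epsInv_def by (rule combination_V5)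

lemma epsInv_fixes:
  assumes "P \<in> V5" "\<And>j. j \<in> T \<Longrightarrow> j < 6 \<Longrightarrow> picoord \<theta> P j = 0"
  shows "epsInv \<theta> T P = P"
  by (rule picoord_ext[OF epsInv_V5 assms(1)]) (use assms(2) in \<open>auto simp: picoord_epsInv\<close>)

text \<open>Sign changes preserve S, since its equations only involve the squares pi_j^2.\<close>

lemma epsInv_Scone: assumes "P \<in> Scone \<theta>" shows "epsInv \<theta> T P \<in> Scone \<theta>"
proof -
  have sq: "(picoord \<theta> (epsInv \<theta> T P) j)^2 = (picoord \<theta> P j)^2" if "j < 6" for j
    using that by (simp add: picoord_epsInv power_mult_distrib)
  have involution: "epsInv \<theta> T (epsInv \<theta> T P) = P"
    by (rule picoord_ext[OF epsInv_V5]) (use assms in \<open>auto simp: Scone_def picoord_epsInv\<close>)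
  have "epsInv \<theta> T 0 = 0" by (simp add: epsInv_def picoord_def)
  hence "epsInv \<theta> T P \<noteq> 0"
    using involution assms by (auto simp: Scone_def)
  moreover have "\<forall>i<3. (\<Sum>j<6. \<theta> j ^ i * omega \<theta> j * (picoord \<theta> (epsInv \<theta> T P) j)^2) = 0"
    using assms unfolding Scone_def by (auto simp: sq)
  ultimately show ?thesis using epsInv_V5 by (simp add: Scone_def)
qed

text \<open>Every nonzero polynomial of degree at most 1 lies on S: the three equations of S
  become coefficients of X^5 of polynomials of degree at most 4.\<close>

lemma linear_in_Scone: assumes "degree P \<le> 1" "P \<noteq> 0" shows "P \<in> Scone \<theta>"
proof -
  have "(\<Sum>j<6. \<theta> j ^ i * omega \<theta> j * (picoord \<theta> P j)^2) = 0" if i: "i < 3" for i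
  proof -
    define r where "r = monom 1 i * P^2"
    have "degree r \<le> i + degree (P^2)" unfolding r_def
      by (rule order.trans[OF degree_mult_le]) (simp add: degree_monom_eq)
    also have "degree (P^2) \<le> 2 * degree P"
      using degree_power_le[of P 2] by (simp add: mult.commute)
    finally have deg: "degree r \<le> 4" using i assms(1) by linarith
    have "(\<Sum>j<6. \<theta> j ^ i * omega \<theta> j * (picoord \<theta> P j)^2) = (\<Sum>j<6. poly r (\<theta> j) / omega \<theta> j)"
      by (rule sum.cong)
        (auto simp: r_def picoord_def poly_monom omega_nonzero power2_eq_square field_simps)
    also have "\<dots> = coeff r 5" using deg by (intro sum_over_nodes_coeff5) simp
    also have "\<dots> = 0" using deg by (simp add: coeff_eq_0)
    finally show ?thesis .
  qed
  moreover have "P \<in> V5" using assms by (simp add: V5_def)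
  ultimately show ?thesis using assms by (simp add: Scone_def)
qed

text \<open>No Lagrange basis vector lies on S: the first equation of S evaluates to omega_k c^2.\<close>

lemma basis_not_in_Scone: assumes k: "k < 6" shows "smult c (Pj \<theta> k) \<notin> Scone \<theta>"
proof
  assume S: "smult c (Pj \<theta> k) \<in> Scone \<theta>"
  hence c: "c \<noteq> 0" by (auto simp: Scone_def)
  have "(\<Sum>j<6. \<theta> j ^ 0 * omega \<theta> j * (picoord \<theta> (smult c (Pj \<theta> k)) j)^2)
      = (\<Sum>j<6. if j = k then omega \<theta> k * c^2 else 0)"
    by (rule sum.cong) (auto simp: picoord_smult picoord_Pj k)
  also have "\<dots> = omega \<theta> k * c^2" using k by simp
  finally show False using S c omega_nonzero[OF k] unfolding Scone_def by force
qed

end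

section \<open>Linear automorphisms of S commuting with all sign changes\<close>

locale commuting_automorphism = six_nodes \<theta> for \<theta> :: "nat \<Rightarrow> 'k::field" +
  fixes L :: "'k poly \<Rightarrow> 'k poly"
  assumes char: "(2::'k) \<noteq> 0"
    and lin: "lin_bij L"
    and preserves_S: "L ` Scone \<theta> = Scone \<theta>"
    and commutes: "\<forall>E\<in>Inv_S \<theta>. same_on_S \<theta> (L \<circ> E) (E \<circ> L)"
begin

lemma L_add: "P \<in> V5 \<Longrightarrow> Q \<in> V5 \<Longrightarrow> L (P + Q) = L P + L Q"
  and L_smult: "P \<in> V5 \<Longrightarrow> L (smult c P) = smult c (L P)"
  and L_V5: "P \<in> V5 \<Longrightarrow> L P \<in> V5"
  and L_inj: "inj_on L V5"
  using lin by (auto simp: lin_bij_def bij_betw_def)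

lemma Scone_V5: "P \<in> Scone \<theta> \<Longrightarrow> P \<in> V5"
  by (simp add: Scone_def)

lemma L_Scone: "P \<in> Scone \<theta> \<Longrightarrow> L P \<in> Scone \<theta>"
  using preserves_S by blast

text \<open>Step A. If pi_k vanishes at a point of S, it vanishes at its image: otherwise commuting
  with the k-th sign change forces the image to be a multiple of P_k, which is not on S.\<close>

lemma zero_coordinate_preserved:
  assumes P: "P \<in> Scone \<theta>" and k: "k < 6" and Pk: "picoord \<theta> P k = 0"
  shows "picoord \<theta> (L P) k = 0"
proof (rule ccontr)
  assume nz: "picoord \<theta> (L P) k \<noteq> 0"
  have "epsInv \<theta> {k} \<in> Inv_S \<theta>" using k by (auto simp: Inv_S_def)
  then obtain c where "L (epsInv \<theta> {k} P) = smult c (epsInv \<theta> {k} (L P))"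
    using commutes P unfolding same_on_S_def comp_def by blast
  moreover have "epsInv \<theta> {k} P = P"
    by (rule epsInv_fixes[OF Scone_V5[OF P]]) (use Pk in simp)
  ultimately have eq: "L P = smult c (epsInv \<theta> {k} (L P))" by simp
  have coords: "picoord \<theta> (L P) j = c * ((if j = k then -1 else 1) * picoord \<theta> (L P) j)"
    if "j < 6" for j
    by (subst eq) (simp add: picoord_smult picoord_epsInv that)
  have "(c + 1) * picoord \<theta> (L P) k = 0"
    using coords[OF k] by (simp add: distrib_right) (metis add.commute eq_neg_iff_add_eq_0)
  hence "c = -1" using nz by (simp add: eq_neg_iff_add_eq_0)
  hence others: "picoord \<theta> (L P) j = 0" if "j < 6" "j \<noteq> k" for j
    using char coords[OF that(1)] that(2) by simp
  have "L P = smult (picoord \<theta> (L P) k) (Pj \<theta> k)"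
  proof (rule picoord_ext[OF Scone_V5[OF L_Scone[OF P]] V5_smult[OF Pj_V5[OF k]]])
    fix i :: nat assume "i < 6"
    thus "picoord \<theta> (L P) i = picoord \<theta> (smult (picoord \<theta> (L P) k) (Pj \<theta> k)) i"
      using others[of i] by (simp add: picoord_smult picoord_Pj k)
  qed
  thus False using L_Scone[OF P] basis_not_in_Scone[OF k] by metis
qed

text \<open>Step B. Split the line X - theta_k, which lies on S
  and has vanishing pi_k, as its j-th sign change plus a multiple of P_j; both summands' images
  have vanishing pi_k, so L P_j does too.\<close>

lemma image_basis_off_diagonal:
  assumes j: "j < 6" and k: "k < 6" and jk: "j \<noteq> k"
  shows "picoord \<theta> (L (Pj \<theta> j)) k = 0"
proof -
  define Q where "Q = [:- \<theta> k, 1:]"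
  define Q' where "Q' = epsInv \<theta> {j} Q"
  define a where "a = 2 * picoord \<theta> Q j"
  have QS: "Q \<in> Scone \<theta>" unfolding Q_def by (rule linear_in_Scone) auto
  have Q'S: "Q' \<in> Scone \<theta>" unfolding Q'_def by (rule epsInv_Scone[OF QS])
  have Qk: "picoord \<theta> Q k = 0" by (simp add: Q_def picoord_def)
  have Q'k: "picoord \<theta> Q' k = 0" using jk k Qk by (simp add: Q'_def picoord_epsInv)
  have "a \<noteq> 0" using j k jk inj omega_nonzero[OF j] char
    by (auto simp: a_def Q_def picoord_def inj_on_def)
  have split: "Q = Q' + smult a (Pj \<theta> j)"
    by (rule picoord_ext[OF Scone_V5[OF QS] V5_add[OF Scone_V5[OF Q'S] V5_smult[OF Pj_V5[OF j]]]])
      (auto simp: picoord_add picoord_smult picoord_Pj j Q'_def picoord_epsInv a_def)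
  have "L Q = L Q' + smult a (L (Pj \<theta> j))"
    by (subst split) (simp add: L_add[OF Scone_V5[OF Q'S] V5_smult[OF Pj_V5[OF j]]] L_smult[OF Pj_V5[OF j]])
  hence "a * picoord \<theta> (L (Pj \<theta> j)) k = 0"
    using zero_coordinate_preserved[OF QS k Qk] zero_coordinate_preserved[OF Q'S k Q'k]
    by (simp add: picoord_add picoord_smult)
  thus ?thesis using \<open>a \<noteq> 0\<close> by simp
qed

definition diag :: "nat \<Rightarrow> 'k" where
  "diag j = picoord \<theta> (L (Pj \<theta> j)) j"

lemma image_basis: assumes j: "j < 6" shows "L (Pj \<theta> j) = smult (diag j) (Pj \<theta> j)"
  by (rule picoord_ext[OF L_V5[OF Pj_V5[OF j]] V5_smult[OF Pj_V5[OF j]]])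
    (use image_basis_off_diagonal[OF j] in \<open>auto simp: picoord_smult picoord_Pj j diag_def\<close>)

lemma picoord_L: assumes P: "P \<in> V5" and j: "j < 6"
  shows "picoord \<theta> (L P) j = diag j * picoord \<theta> P j"
proof -
  have "L (\<Sum>i\<in>A. smult (a i) (Pj \<theta> i)) = (\<Sum>i\<in>A. smult (diag i * a i) (Pj \<theta> i))"
    if "A \<subseteq> {..<6}" for A a
    using that
  proof (induction A rule: infinite_finite_induct)
    case (insert x A)
    have "(\<Sum>i\<in>A. smult (a i) (Pj \<theta> i)) \<in> V5" using insert by (intro V5_sum V5_smult Pj_V5) auto
    with insert show ?case
      by (simp add: L_add V5_smult Pj_V5 L_smult image_basis mult.commute)
  qed (use L_smult[OF V5_zero, of 0] in simp_all)
  hence "L P = (\<Sum>i<6. smult (diag i * picoord \<theta> P i) (Pj \<theta> i))"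
    using lagrange_expansion[OF P] by (metis order_refl)
  thus ?thesis by (simp add: picoord_combination[OF j])
qed

text \<open>Step C. Since L maps each line X - t onto S, the i-th equation of S gives
  sum_j diag_j^2 theta_j^i (theta_j - t)^2 / omega_j = 0 for all t and i < 3; comparing
  t = 0, 1, -1 shows that the weights diag_j^2 have vanishing moments of order at most 4.\<close>

lemma shifted_moment:
  assumes i: "i < 3"
  shows "(\<Sum>j<6. diag j ^ 2 * (\<theta> j ^ (i+2) - 2 * t * \<theta> j ^ (i+1) + t^2 * \<theta> j ^ i) / omega \<theta> j) = 0"
proof -
  define Q where "Q = [:- t, 1:]"
  have QS: "Q \<in> Scone \<theta>" unfolding Q_def by (rule linear_in_Scone) auto
  have "(\<Sum>j<6. \<theta> j ^ i * omega \<theta> j * (picoord \<theta> (L Q) j)^2) = 0"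
    using L_Scone[OF QS] i unfolding Scone_def by blast
  moreover have "\<theta> j ^ i * omega \<theta> j * (picoord \<theta> (L Q) j)^2
      = diag j ^ 2 * (\<theta> j ^ (i+2) - 2 * t * \<theta> j ^ (i+1) + t^2 * \<theta> j ^ i) / omega \<theta> j"
    if "j < 6" for j
  proof -
    have image_coord: "picoord \<theta> (L Q) j = diag j * (\<theta> j - t) / omega \<theta> j"
      unfolding picoord_L[OF Scone_V5[OF QS] that] by (simp add: Q_def picoord_def)
    show ?thesis
      unfolding image_coord using omega_nonzero[OF that] by (simp add: power2_eq_square field_simps)
  qed
  ultimately show ?thesis by simp
qed

lemma diag_square_moments: assumes n: "n \<le> 4"
  shows "(\<Sum>j<6. diag j ^ 2 * \<theta> j ^ n / omega \<theta> j) = 0"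
proof -
  define M where "M n = (\<Sum>j<6. diag j ^ 2 * \<theta> j ^ n / omega \<theta> j)" for n
  have shift: "M (i+2) - 2 * t * M (i+1) + t^2 * M i = 0" if "i < 3" for i t
    using shifted_moment[OF that, of t]
    by (simp add: M_def algebra_simps sum.distrib sum_subtractf sum_distrib_left add_divide_distrib
        diff_divide_distrib flip: sum_divide_distrib)
  have high: "M (i+2) = 0" if "i < 3" for i using shift[OF that, of 0] by simp
  have plus: "M 2 - 2 * M 1 + M 0 = 0" and minus: "M 2 + 2 * M 1 + M 0 = 0"
    using shift[of 0 1] shift[of 0 "-1"] by (simp_all add: numeral_2_eq_2)
  have "2 * (2 * M 1) = (M 2 + 2 * M 1 + M 0) - (M 2 - 2 * M 1 + M 0)"
    by (simp add: algebra_simps)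
  also have "\<dots> = 0" using plus minus by simp
  finally have "M 1 = 0" using char by (metis mult_eq_0_iff)
  moreover have "M 0 = 0"
    using plus \<open>M 1 = 0\<close> high[of 0] by (simp add: numeral_2_eq_2)
  moreover have "n = 0 \<or> n = 1 \<or> n = 0 + 2 \<or> n = 1 + 2 \<or> n = 2 + 2" using n by auto
  ultimately have "M n = 0" using high[of 0] high[of 1] high[of 2] by auto
  thus ?thesis by (simp add: M_def)
qed

text \<open>Step D. All diag_j agree up to sign, and diag_0 is nonzero because L is injective;
  hence L equals diag_0 times a sign change.\<close>

lemma diag_sign: assumes j: "j < 6" shows "diag j = diag 0 \<or> diag j = - diag 0"
proof -
  have "diag j ^ 2 = diag 0 ^ 2"
    by (rule vanishing_moments_constant[OF diag_square_moments j]) simp_all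
  hence "(diag j - diag 0) * (diag j + diag 0) = 0" by (simp add: algebra_simps power2_eq_square)
  thus ?thesis by (auto simp: eq_neg_iff_add_eq_0)
qed

lemma diag0_nonzero: "diag 0 \<noteq> 0"
proof
  assume "diag 0 = 0"
  hence "L (Pj \<theta> 0) = L 0" using image_basis[of 0] L_smult[OF V5_zero, of 0] by simp
  hence "Pj \<theta> 0 = 0" using L_inj Pj_V5[of 0] V5_zero by (auto dest: inj_onD)
  thus False using omega_nonzero[of 0] by (simp add: omega_def)
qed

theorem agrees_with_sign_change: "\<exists>E\<in>Inv_S \<theta>. same_on_S \<theta> L E"
proof -
  define T where "T = {j. j < 6 \<and> diag j \<noteq> diag 0}"
  have diag_T: "diag j = (if j \<in> T then -1 else 1) * diag 0" if "j < 6" for j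
    using diag_sign[OF that] diag0_nonzero that char by (auto simp: T_def)
  have "L P = smult (diag 0) (epsInv \<theta> T P)" if P: "P \<in> Scone \<theta>" for P
  proof (rule picoord_ext[OF L_V5[OF Scone_V5[OF P]] V5_smult[OF epsInv_V5]])
    fix j :: nat assume j: "j < 6"
    show "picoord \<theta> (L P) j = picoord \<theta> (smult (diag 0) (epsInv \<theta> T P)) j"
      unfolding picoord_L[OF Scone_V5[OF P] j] picoord_smult picoord_epsInv[OF j]
      by (subst diag_T[OF j]) simp
  qed
  hence "same_on_S \<theta> L (epsInv \<theta> T)" unfolding same_on_S_def by blast
  moreover have "epsInv \<theta> T \<in> Inv_S \<theta>" by (auto simp: Inv_S_def T_def)
  ultimately show ?thesis by blast
qed

end

theorem mainTheorem11:
  fixes F :: "'k::field poly" and \<theta> :: "nat \<Rightarrow> 'k" and L :: "'k poly \<Rightarrow> 'k poly"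
  assumes alg_closed: "\<forall>p::'k poly. degree p > 0 \<longrightarrow> (\<exists>x. poly p x = 0)"
    and char: "(2::'k) \<noteq> 0"
    and degF: "degree F = 6"
    and distinct: "inj_on \<theta> {..<6}"
    and roots: "\<forall>j<6. poly F (\<theta> j) = 0"
    and A: "in_GL_S \<theta> L"
    and notInv: "\<forall>E\<in>Inv_S \<theta>. \<not> same_on_S \<theta> L E"
  shows "\<exists>E\<in>Inv_S \<theta>. \<not> same_on_S \<theta> (L \<circ> E) (E \<circ> L)"
proof (rule ccontr)
  assume "\<not> ?thesis"
  hence "commuting_automorphism \<theta> L"
    using distinct char A by unfold_locales (auto simp: in_GL_S_def)
  thus False
    using commuting_automorphism.agrees_with_sign_change notInv by blast
qed

end
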